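(* In the setting and construction described in the context, for every $i=1,2,\dots,t-2$ we have $|S_{i+1}|\leq |S_i|\,(1+R(4,R(4,s)))$. (More precisely, $|X_i^j|\le R(4,R(4,s))$ for every $j$.)
   Context: All graphs are finite and simple. $P_t$ is the path on $t$ vertices; $K_4$ is the complete graph on $4$ vertices; $SDK_s$ is the one-subdivision of $K_{1,s}$ (replace each edge $uv$ of the star $K_{1,s}$ by a path $u w v$ through a new vertex $w$). A graph is $\mathcal{H}$-free if it has no induced subgraph isomorphic to a member of $\mathcal{H}$. $R(k,l)$ denotes the Ramsey number: the least integer such that every graph on at least $R(k,l)$ vertices contains a clique on $k$ vertices or a stable set on $l$ vertices. For $X\subseteq V$, $N(X)=\bigcup_{v\in X}N(v)$. Setting: $s,t$ are positive integers with $t\ge 2$, and $G=(V,E)$ is a connected $(P_t,SDK_s,K_4)$-free graph. Fix a vertex $a\in V$, let $d(v)$ be the distance from $v$ to $a$, and set $S_1=\{a\}$. For $i=1,2,\dots,t-2$ define $S_{i+1}$ as follows: let $B_i=N(S_i)$ and $W_i=V\setminus(B_i\cup S_i)$; enumerate $S_i=\{v_1,\dots,v_{|S_i|}\}$ and for $j=1,\dots,|S_i|$ let $B_i^j=\{v\in B_i\setminus\bigcup_{k<j}B_i^k : v\text{ is adjacent to }v_j\}$ (so $B_i=\bigcup_j B_i^j$); for each $j$ let $X_i^j\subseteq B_i^j$ be an inclusion-minimal set such that every $w\in W_i$ with $N(w)\cap B_i^j\neq\emptyset$ satisfies $N(w)\cap X_i^j\ne\emptyset$; let $X_i=\bigcup_j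 X_i^j$ and $S_{i+1}=S_i\cup X_i$. The choices of enumeration and of minimal sets are arbitrary. *)

theory Defs
  imports Main
begin

definition simple_graph :: "'a set \<Rightarrow> ('a \<Rightarrow> 'a \<Rightarrow> bool) \<Rightarrow> bool" where
  "simple_graph V E \<longleftrightarrow> finite V \<and> (\<forall>u v. E u v \<longrightarrow> E v u) \<and> (\<forall>v. \<not> E v v)
     \<and> (\<forall>u v. E u v \<longrightarrow> u \<in> V \<and> v \<in> V)"

definition connected_graph :: "'a set \<Rightarrow> ('a \<Rightarrow> 'a \<Rightarrow> bool) \<Rightarrow> bool" where
  "connected_graph V E \<longleftrightarrow> (\<forall>u\<in>V. \<forall>v\<in>V. E\<^sup>*\<^sup>* u v)"

definition has_induced :: "'a set \<Rightarrow> ('a \<Rightarrow> 'a \<Rightarrow> bool) \<Rightarrow> nat set \<Rightarrow> (nat \<Rightarrow> nat \<Rightarrow> bool) \<Rightarrow> bool" where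
  "has_induced V E VH EH \<longleftrightarrow> (\<exists>f. inj_on f VH \<and> f ` VH \<subseteq> V \<and>
      (\<forall>x\<in>VH. \<forall>y\<in>VH. E (f x) (f y) \<longleftrightarrow> EH x y))"

definition path_V :: "nat \<Rightarrow> nat set" where "path_V t = {..<t}"
definition path_E :: "nat \<Rightarrow> nat \<Rightarrow> bool" where "path_E x y \<longleftrightarrow> Suc x = y \<or> Suc y = x"

definition K4_V :: "nat set" where "K4_V = {..<4}"
definition K4_E :: "nat \<Rightarrow> nat \<Rightarrow> bool" where "K4_E x y \<longleftrightarrow> x \<noteq> y"

(* SDK_s: centre 0, leaves 1..s, subdivision vertex k+s on the edge 0 -- k *)
definition SDK_V :: "nat \<Rightarrow> nat set" where "SDK_V s = {..2*s}"
definition SDK_E :: "nat \<Rightarrow> nat \<Rightarrow> nat \<Rightarrow> bool" where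
  "SDK_E s x y \<longleftrightarrow>
     (x = 0 \<and> y \<in> {s+1..2*s}) \<or> (y = 0 \<and> x \<in> {s+1..2*s}) \<or>
     (x \<in> {1..s} \<and> y = x + s) \<or> (y \<in> {1..s} \<and> x = y + s)"

definition ramsey :: "nat \<Rightarrow> nat \<Rightarrow> nat" where
  "ramsey k l = (LEAST n. \<forall>m\<ge>n. \<forall>E :: nat \<Rightarrow> nat \<Rightarrow> bool.
      (\<forall>x y. E x y \<longrightarrow> E y x) \<longrightarrow>
      (\<exists>K\<subseteq>{..<m}. card K = k \<and> (\<forall>x\<in>K. \<forall>y\<in>K. x \<noteq> y \<longrightarrow> E x y)) \<or>
      (\<exists>I\<subseteq>{..<m}. card I = l \<and> (\<forall>x\<in>I. \<forall>y\<in>I. x \<noteq> y \<longrightarrow> \<not> E x y)))"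

definition nbhd :: "'a set \<Rightarrow> ('a \<Rightarrow> 'a \<Rightarrow> bool) \<Rightarrow> 'a set \<Rightarrow> 'a set" where
  "nbhd V E X = {v \<in> V. \<exists>u\<in>X. E u v}"

(* B_i^j for enumeration vs of S_i (0-indexed j) *)
definition Bpart :: "'a set \<Rightarrow> ('a \<Rightarrow> 'a \<Rightarrow> bool) \<Rightarrow> 'a list \<Rightarrow> nat \<Rightarrow> 'a set" where
  "Bpart V E vs j = {v \<in> nbhd V E (set vs). E (vs ! j) v \<and> (\<forall>k<j. \<not> E (vs ! k) v)}"

definition Wset :: "'a set \<Rightarrow> ('a \<Rightarrow> 'a \<Rightarrow> bool) \<Rightarrow> 'a set \<Rightarrow> 'a set" where
  "Wset V E S = V - (nbhd V E S \<union> S)"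

definition dominates :: "'a set \<Rightarrow> ('a \<Rightarrow> 'a \<Rightarrow> bool) \<Rightarrow> 'a set \<Rightarrow> 'a set \<Rightarrow> 'a set \<Rightarrow> bool" where
  "dominates V E W B X \<longleftrightarrow> (\<forall>w\<in>W. nbhd V E {w} \<inter> B \<noteq> {} \<longrightarrow> nbhd V E {w} \<inter> X \<noteq> {})"

definition minimal_dom :: "'a set \<Rightarrow> ('a \<Rightarrow> 'a \<Rightarrow> bool) \<Rightarrow> 'a set \<Rightarrow> 'a set \<Rightarrow> 'a set \<Rightarrow> bool" where
  "minimal_dom V E W B X \<longleftrightarrow> X \<subseteq> B \<and> dominates V E W B X \<and>
     (\<forall>Y. Y \<subset> X \<longrightarrow> \<not> dominates V E W B Y)"

end

theory Submission
  imports Defs "HOL-Library.Ramsey"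
begin

text \<open>Every vertex x of a minimal dominating set X = X_i^j has a private neighbour p x in W_i,
  since otherwise X - {x} would still dominate. All of X is adjacent to v_j, whereas no vertex of
  W_i is adjacent to S_i. If |X| > R(4,R(4,s)), then K_4-freeness and Ramsey's theorem give a
  stable set I \<subseteq> X of size R(4,s), and then a stable set of size s among the private neighbours
  of I; with v_j as centre, these and their partners in I induce SDK_s. Summing |X_i^j| over the
  |S_i| indices j bounds |S_{i+1}|.\<close>

definition complete_on :: "('a \<Rightarrow> 'a \<Rightarrow> bool) \<Rightarrow> 'a set \<Rightarrow> bool" where
  "complete_on E K \<longleftrightarrow> (\<forall>x\<in>K. \<forall>y\<in>K. x \<noteq> y \<longrightarrow> E x y)"

definition stable_on :: "('a \<Rightarrow> 'a \<Rightarrow> bool) \<Rightarrow> 'a set \<Rightarrow> bool" where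
  "stable_on E I \<longleftrightarrow> (\<forall>x\<in>I. \<forall>y\<in>I. x \<noteq> y \<longrightarrow> \<not> E x y)"

lemma ramsey_nat:
  assumes "ramsey k l \<le> m" and "symp E"
  shows "(\<exists>K\<subseteq>{..<m}. card K = k \<and> complete_on E K) \<or> (\<exists>I\<subseteq>{..<m}. card I = l \<and> stable_on E I)"
proof -
  let ?P = "\<lambda>n. \<forall>m\<ge>n. \<forall>E :: nat \<Rightarrow> nat \<Rightarrow> bool. (\<forall>x y. E x y \<longrightarrow> E y x) \<longrightarrow>
      (\<exists>K\<subseteq>{..<m}. card K = k \<and> (\<forall>x\<in>K. \<forall>y\<in>K. x \<noteq> y \<longrightarrow> E x y)) \<or>
      (\<exists>I\<subseteq>{..<m}. card I = l \<and> (\<forall>x\<in>I. \<forall>y\<in>I. x \<noteq> y \<longrightarrow> \<not> E x y))"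
  obtain r where r: "\<forall>(V::nat set) F. finite V \<and> r \<le> card V \<longrightarrow>
      (\<exists>R\<subseteq>V. card R = k \<and> clique R F \<or> card R = l \<and> indep R F)"
    using ramsey2 by blast
  have "?P r"
  proof (intro allI impI)
    fix m :: nat and E :: "nat \<Rightarrow> nat \<Rightarrow> bool"
    assume "r \<le> m" and E_sym: "\<forall>x y. E x y \<longrightarrow> E y x"
    define F where "F = {{x, y} | x y. E x y}"
    have edge: "{x, y} \<in> F \<longleftrightarrow> E x y" for x y
      using E_sym by (auto simp: F_def doubleton_eq_iff)
    obtain R where "R \<subseteq> {..<m}" and "card R = k \<and> clique R F \<or> card R = l \<and> indep R F"
      using r[rule_format, of "{..<m}" F] \<open>r \<le> m\<close> by auto
    moreover have "clique R F \<Longrightarrow> \<forall>x\<in>R. \<forall>y\<in>R. x \<noteq> y \<longrightarrow> E x y"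
      by (simp add: clique_def edge)
    moreover have "indep R F \<Longrightarrow> \<forall>x\<in>R. \<forall>y\<in>R. x \<noteq> y \<longrightarrow> \<not> E x y"
      by (simp add: indep_def edge)
    ultimately show "(\<exists>K\<subseteq>{..<m}. card K = k \<and> (\<forall>x\<in>K. \<forall>y\<in>K. x \<noteq> y \<longrightarrow> E x y)) \<or>
      (\<exists>I\<subseteq>{..<m}. card I = l \<and> (\<forall>x\<in>I. \<forall>y\<in>I. x \<noteq> y \<longrightarrow> \<not> E x y))"
      by blast
  qed
  then have "?P (ramsey k l)"
    unfolding ramsey_def by (rule LeastI)
  then show ?thesis
    using assms unfolding complete_on_def stable_on_def symp_def by blast
qed

lemma ramsey_finite:
  assumes "finite A" and "ramsey k l \<le> card A" and "symp E"
  shows "(\<exists>K\<subseteq>A. card K = k \<and> complete_on E K) \<or> (\<exists>I\<subseteq>A. card I = l \<and> stable_on E I)"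
proof -
  obtain g where g: "bij_betw g {..<card A} A"
    using ex_bij_betw_nat_finite[OF \<open>finite A\<close>] by (auto simp: atLeast0LessThan)
  have image: "g ` U \<subseteq> A" "card (g ` U) = card U" if "U \<subseteq> {..<card A}" for U
    using g card_image[OF inj_on_subset[OF _ that]] that by (auto simp: bij_betw_def)
  have "symp (\<lambda>x y. E (g x) (g y))"
    using \<open>symp E\<close> by (simp add: symp_def)
  from ramsey_nat[OF \<open>ramsey k l \<le> card A\<close> this]
  consider K where "K \<subseteq> {..<card A}" "card K = k" "complete_on (\<lambda>x y. E (g x) (g y)) K"
    | I where "I \<subseteq> {..<card A}" "card I = l" "stable_on (\<lambda>x y. E (g x) (g y)) I"
    by blast
  then show ?thesis
  proof cases
    case (1 K)
    moreover have "complete_on E (g ` K)"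
      using 1 by (auto simp: complete_on_def)
    ultimately show ?thesis
      using image[of K] by (intro disjI1 exI[of _ "g ` K"]) simp
  next
    case (2 I)
    moreover have "stable_on E (g ` I)"
      using 2 by (auto simp: stable_on_def)
    ultimately show ?thesis
      using image[of I] by (intro disjI2 exI[of _ "g ` I"]) simp
  qed
qed

lemma has_induced_K4_if_complete:
  assumes "simple_graph V E" and "K \<subseteq> V" and "card K = 4" and "complete_on E K"
  shows "has_induced V E K4_V K4_E"
proof -
  have "finite K"
    using \<open>card K = 4\<close> by (simp add: card_ge_0_finite)
  then obtain h where h: "bij_betw h {..<4::nat} K"
    using ex_bij_betw_nat_finite \<open>card K = 4\<close> by (metis atLeast0LessThan)
  then have "inj_on h K4_V" "h ` K4_V \<subseteq> V"
    using \<open>K \<subseteq> V\<close> by (auto simp: bij_betw_def K4_V_def)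
  moreover have "E (h x) (h y) \<longleftrightarrow> K4_E x y" if "x \<in> K4_V" "y \<in> K4_V" for x y
    using that h assms(1,4)
    by (auto simp: K4_V_def K4_E_def simple_graph_def complete_on_def bij_betw_def inj_on_def)
  ultimately show ?thesis
    unfolding has_induced_def by blast
qed

lemma K4_free_stable_subset:
  assumes "simple_graph V E" and "\<not> has_induced V E K4_V K4_E"
    and "A \<subseteq> V" and "ramsey 4 l \<le> card A"
  obtains I where "I \<subseteq> A" "card I = l" "stable_on E I"
proof -
  have "finite A" and "symp E"
    using assms(1,3) finite_subset by (auto simp: simple_graph_def symp_def)
  from ramsey_finite[OF this(1) \<open>ramsey 4 l \<le> card A\<close> this(2)]
  consider K where "K \<subseteq> A" "card K = 4" "complete_on E K"
    | I where "I \<subseteq> A" "card I = l" "stable_on E I"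
    by blast
  then show ?thesis
  proof cases
    case (1 K)
    then show ?thesis
      using has_induced_K4_if_complete[OF assms(1)] assms(2,3) by blast
  qed (use that in blast)
qed

lemma SDK_V_cases:
  assumes "n \<in> SDK_V s"
  obtains "n = 0" | k where "k \<in> {1..s}" "n = k" | k where "k \<in> {1..s}" "n = k + s"
proof -
  have "n = 0 \<or> n \<in> {1..s} \<or> n - s \<in> {1..s} \<and> n = n - s + s"
    using assms by (auto simp: SDK_V_def)
  then show ?thesis
    using that by blast
qed

lemma has_induced_SDK_if_star:
  assumes G: "simple_graph V E" and "v \<in> V" and "finite I" and "card I = s"
    and centre: "\<And>x. x \<in> I \<Longrightarrow> E v x \<and> \<not> E v (p x) \<and> p x \<noteq> v"
    and leaf: "\<And>x. x \<in> I \<Longrightarrow> E (p x) x"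
    and privacy: "\<And>x y. x \<in> I \<Longrightarrow> y \<in> I \<Longrightarrow> x \<noteq> y \<Longrightarrow> \<not> E (p x) y"
    and "stable_on E I" and "stable_on E (p ` I)"
  shows "has_induced V E (SDK_V s) (SDK_E s)"
proof -
  have E_commute: "E x y \<longleftrightarrow> E y x" and irrefl: "\<not> E x x"
    and inV: "E x y \<Longrightarrow> x \<in> V \<and> y \<in> V" for x y
    using G by (auto simp: simple_graph_def)
  obtain h where h: "bij_betw h {1..s} I"
    using ex_bij_betw_nat_finite_1[OF \<open>finite I\<close>] \<open>card I = s\<close> by blast
  have hI: "k \<in> {1..s} \<Longrightarrow> h k \<in> I" for k
    using h by (auto simp: bij_betw_def)
  have h_eq: "k \<in> {1..s} \<Longrightarrow> k' \<in> {1..s} \<Longrightarrow> h k = h k' \<longleftrightarrow> k = k'" for k k'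
    using h by (meson bij_betw_def inj_on_eq_iff)
  have leaf_sub: "E (p (h k)) (h k') \<longleftrightarrow> k = k'" if "k \<in> {1..s}" "k' \<in> {1..s}" for k k'
  proof
    assume "E (p (h k)) (h k')"
    then show "k = k'"
      using privacy[OF hI hI] h_eq that by blast
  qed (use leaf hI that in blast)
  have p_eq: "p (h k) = p (h k') \<longleftrightarrow> k = k'" if "k \<in> {1..s}" "k' \<in> {1..s}" for k k'
  proof
    assume "p (h k) = p (h k')"
    then have "E (p (h k)) (h k')"
      using leaf_sub[of k' k'] that by simp
    then show "k = k'"
      using leaf_sub that by blast
  qed simp
  have leaf_leaf: "\<not> E (p (h k)) (p (h k'))" if "k \<in> {1..s}" "k' \<in> {1..s}" for k k'
    using \<open>stable_on E (p ` I)\<close> irrefl hI[OF that(1)] hI[OF that(2)] unfolding stable_on_def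
    by (metis imageI)
  have sub_sub: "\<not> E (h k) (h k')" if "k \<in> {1..s}" "k' \<in> {1..s}" for k k'
    using \<open>stable_on E I\<close> irrefl hI[OF that(1)] hI[OF that(2)] unfolding stable_on_def by metis
  have centre_sub: "E v (h k)" and centre_leaf: "\<not> E v (p (h k))" "p (h k) \<noteq> v"
    if "k \<in> {1..s}" for k
    using centre hI[OF that] by auto
  \<comment> \<open>centre 0 \<mapsto> v, leaf k \<mapsto> p (h k), subdivision vertex k + s \<mapsto> h k\<close>
  define F where "F n = (if n = 0 then v else if n \<le> s then p (h n) else h (n - s))" for n
  have sub_ne_centre: "h k \<noteq> v" and sub_ne_leaf: "h k \<noteq> p (h k')"
    if "k \<in> {1..s}" "k' \<in> {1..s}" for k k'
    using centre_sub[OF that(1)] leaf_sub[OF that(2) that(2)] sub_sub[OF that] irrefl by metis+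
  have "inj_on F (SDK_V s)"
  proof (rule inj_onI)
    fix m n
    assume m: "m \<in> SDK_V s" and n: "n \<in> SDK_V s" and "F m = F n"
    then show "m = n"
      by (cases rule: SDK_V_cases[OF m]; cases rule: SDK_V_cases[OF n])
        (auto simp: F_def h_eq p_eq centre_leaf centre_leaf(2)[symmetric]
          sub_ne_centre sub_ne_centre[symmetric] sub_ne_leaf sub_ne_leaf[symmetric])
  qed
  moreover have "F ` SDK_V s \<subseteq> V"
  proof
    fix u
    assume "u \<in> F ` SDK_V s"
    then obtain n where n: "n \<in> SDK_V s" and "u = F n"
      by blast
    then show "u \<in> V"
      using \<open>v \<in> V\<close> inV[OF centre_sub] inV[OF leaf[OF hI]]
      by (cases rule: SDK_V_cases[OF n]) (auto simp: F_def)
  qed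
  moreover have "E (F m) (F n) \<longleftrightarrow> SDK_E s m n" if m: "m \<in> SDK_V s" and n: "n \<in> SDK_V s" for m n
    by (cases rule: SDK_V_cases[OF m]; cases rule: SDK_V_cases[OF n])
      (auto simp: F_def SDK_E_def irrefl centre_sub centre_leaf leaf_sub leaf_leaf sub_sub
        E_commute[of "h _" v] E_commute[of "p (h _)" v] E_commute[of "h _" "p (h _)"])
  ultimately show ?thesis
    unfolding has_induced_def by blast
qed

lemma minimal_dom_private_neighbour:
  assumes "minimal_dom V E W B X" and "X \<subseteq> V" and "x \<in> X"
  obtains w where "w \<in> W" "E w x" "\<And>y. y \<in> X \<Longrightarrow> E w y \<Longrightarrow> y = x"
proof -
  have "\<not> dominates V E W B (X - {x})"
    using assms(1,3) by (auto simp: minimal_dom_def)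
  then obtain w where "w \<in> W" "nbhd V E {w} \<inter> B \<noteq> {}" and "nbhd V E {w} \<inter> (X - {x}) = {}"
    by (auto simp: dominates_def)
  moreover from this have "nbhd V E {w} \<inter> X \<noteq> {}"
    using assms(1) by (auto simp: minimal_dom_def dominates_def)
  ultimately show ?thesis
    using that \<open>X \<subseteq> V\<close> by (auto simp: nbhd_def)
qed

lemma card_minimal_dom_le_ramsey:
  assumes G: "simple_graph V E"
    and no_SDK: "\<not> has_induced V E (SDK_V s) (SDK_E s)"
    and no_K4: "\<not> has_induced V E K4_V K4_E"
    and dom: "minimal_dom V E (Wset V E S) B X"
    and "v \<in> S" and B: "\<And>x. x \<in> B \<Longrightarrow> E v x"
  shows "card X \<le> ramsey 4 (ramsey 4 s)"
proof (rule ccontr)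
  assume big: "\<not> card X \<le> ramsey 4 (ramsey 4 s)"
  have inV: "E x y \<Longrightarrow> x \<in> V \<and> y \<in> V" for x y
    using G by (auto simp: simple_graph_def)
  have centre: "E v x" if "x \<in> X" for x
    using B dom that by (auto simp: minimal_dom_def)
  then have "X \<subseteq> V"
    using inV by blast
  have "\<forall>x\<in>X. \<exists>w. w \<in> Wset V E S \<and> E w x \<and> (\<forall>y\<in>X. E w y \<longrightarrow> y = x)"
    by (metis minimal_dom_private_neighbour[OF dom \<open>X \<subseteq> V\<close>])
  then obtain p where p: "\<And>x. x \<in> X \<Longrightarrow> p x \<in> Wset V E S \<and> E (p x) x \<and> (\<forall>y\<in>X. E (p x) y \<longrightarrow> y = x)"
    by metis
  then have "inj_on p X"
    by (metis inj_onI)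
  have far: "\<not> E v (p x) \<and> p x \<noteq> v" if "x \<in> X" for x
    using p[OF that] \<open>v \<in> S\<close> by (auto simp: Wset_def nbhd_def)
  from big have "ramsey 4 (ramsey 4 s) \<le> card X"
    by simp
  then obtain I where "I \<subseteq> X" "card I = ramsey 4 s" "stable_on E I"
    by (rule K4_free_stable_subset[OF G no_K4 \<open>X \<subseteq> V\<close>])
  moreover have "p ` I \<subseteq> V"
    using p inV \<open>I \<subseteq> X\<close> by blast
  moreover have "card (p ` I) = ramsey 4 s"
    using card_image[OF inj_on_subset[OF \<open>inj_on p X\<close> \<open>I \<subseteq> X\<close>]] \<open>card I = ramsey 4 s\<close> by simp
  ultimately obtain Z where "Z \<subseteq> p ` I" "card Z = s" "stable_on E Z"
    by (metis K4_free_stable_subset[OF G no_K4] order_refl)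
  then obtain J where "J \<subseteq> I" and Z: "Z = p ` J"
    by (meson subset_imageE)
  have "J \<subseteq> X"
    using \<open>J \<subseteq> I\<close> \<open>I \<subseteq> X\<close> by blast
  have "finite J"
    using \<open>J \<subseteq> X\<close> \<open>X \<subseteq> V\<close> G by (meson finite_subset simple_graph_def subset_trans)
  have "card J = s"
    using card_image[OF inj_on_subset[OF \<open>inj_on p X\<close> \<open>J \<subseteq> X\<close>]] Z \<open>card Z = s\<close> by simp
  have "X \<noteq> {}"
    using big by auto
  then have "v \<in> V"
    using centre inV by blast
  have "has_induced V E (SDK_V s) (SDK_E s)"
  proof (rule has_induced_SDK_if_star[OF G \<open>v \<in> V\<close> \<open>finite J\<close> \<open>card J = s\<close>])
    show "E v x \<and> \<not> E v (p x) \<and> p x \<noteq> v" if "x \<in> J" for x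
      using centre far that \<open>J \<subseteq> X\<close> by blast
    show "E (p x) x" if "x \<in> J" for x
      using p that \<open>J \<subseteq> X\<close> by blast
    show "\<not> E (p x) y" if "x \<in> J" "y \<in> J" "x \<noteq> y" for x y
      using p that \<open>J \<subseteq> X\<close> by blast
    show "stable_on E J"
      using \<open>stable_on E I\<close> \<open>J \<subseteq> I\<close> by (auto simp: stable_on_def)
    show "stable_on E (p ` J)"
      using \<open>stable_on E Z\<close> Z by simp
  qed
  then show False
    using no_SDK by blast
qed

theorem lemma3p1:
  fixes V :: "'a set" and E :: "'a \<Rightarrow> 'a \<Rightarrow> bool" and a :: 'a and s t :: nat
    and S :: "nat \<Rightarrow> 'a set" and vs :: "nat \<Rightarrow> 'a list" and X :: "nat \<Rightarrow> nat \<Rightarrow> 'a set"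
  assumes "simple_graph V E" and "connected_graph V E"
    and "s \<ge> 1" and "t \<ge> 2"
    and "\<not> has_induced V E (path_V t) path_E"
    and "\<not> has_induced V E (SDK_V s) (SDK_E s)"
    and "\<not> has_induced V E K4_V K4_E"
    and "a \<in> V"
    and "S 1 = {a}"
    and "\<And>i. 1 \<le> i \<Longrightarrow> i \<le> t - 2 \<Longrightarrow> distinct (vs i) \<and> set (vs i) = S i"
    and "\<And>i j. 1 \<le> i \<Longrightarrow> i \<le> t - 2 \<Longrightarrow> j < length (vs i) \<Longrightarrow>
           minimal_dom V E (Wset V E (S i)) (Bpart V E (vs i) j) (X i j)"
    and "\<And>i. 1 \<le> i \<Longrightarrow> i \<le> t - 2 \<Longrightarrow> S (i + 1) = S i \<union> (\<Union>j<length (vs i). X i j)"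
  shows "\<forall>i\<in>{1..t-2}. card (S (i + 1)) \<le> card (S i) * (1 + ramsey 4 (ramsey 4 s))
           \<and> (\<forall>j<length (vs i). card (X i j) \<le> ramsey 4 (ramsey 4 s))"
proof
  fix i
  assume "i \<in> {1..t-2}"
  then have "1 \<le> i" "i \<le> t - 2"
    by auto
  note enum = assms(10)[OF this] and dom = assms(11)[OF this] and step = assms(12)[OF this]
  let ?R = "ramsey 4 (ramsey 4 s)"
  have X_bound: "card (X i j) \<le> ?R" if "j < length (vs i)" for j
  proof (rule card_minimal_dom_le_ramsey[OF assms(1,6,7)])
    show "minimal_dom V E (Wset V E (S i)) (Bpart V E (vs i) j) (X i j)"
      using dom[OF that] .
    show "vs i ! j \<in> S i"
      using enum nth_mem[OF that] by blast
  qed (auto simp: Bpart_def)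
  have "card (S (i + 1)) \<le> card (S i) + card (\<Union>j<length (vs i). X i j)"
    unfolding step by (rule card_Un_le)
  also have "card (\<Union>j<length (vs i). X i j) \<le> (\<Sum>j<length (vs i). card (X i j))"
    by (rule card_UN_le) simp
  also have "\<dots> \<le> card (S i) * ?R"
    using sum_bounded_above[of "{..<length (vs i)}" "\<lambda>j. card (X i j)" ?R] X_bound
      distinct_card[of "vs i"] enum by simp
  finally show "card (S (i + 1)) \<le> card (S i) * (1 + ?R) \<and> (\<forall>j<length (vs i). card (X i j) \<le> ?R)"
    using X_bound by (simp add: algebra_simps)
qed

end
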